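(* Let $\gamma$ be a generator of $\mathbb{F}_{q^m}^*$ and let $\beta_1,\dots,\beta_m\in\mathbb{F}_{q^m}$ be linearly independent over $\mathbb{F}_q$. Let $n=(q-1)m$ and $1\le k\le n$. For $\ell\in\{0,1,\dots,q-2\}$ let $M_\ell$ be the $k\times m$ matrix over $\mathbb{F}_{q^m}$ with $(i,j)$ entry $\gamma^{\ell(1+q+\cdots+q^{i-1})}\beta_j^{q^i}$ for $i=0,\dots,k-1$, $j=1,\dots,m$ (row $i=0$ is $(\beta_1,\dots,\beta_m)$), and let $M=[M_0\,|\,M_1\,|\,\cdots\,|\,M_{q-2}]$ be the $k\times n$ matrix. Then for every nonzero $\lambda\in\mathbb{F}_{q^m}^k$, $\sum_{\ell=0}^{q-2}\mathrm{rk}_{\mathbb{F}_q}(\lambda^T M_\ell)\ge n-k+1$; i.e., $M$ generates a maximum sum-rank distance code with respect to the partition of $[n]$ into the $q-1$ blocks of size $m$ corresponding to $M_0,\dots,M_{q-2}$.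
   Context: Fix a basis of $\mathbb{F}_{q^m}$ over $\mathbb{F}_q$. For a row vector $z=(z_1,\dots,z_m)\in\mathbb{F}_{q^m}^m$, $\mathrm{rk}_{\mathbb{F}_q}(z)$ denotes the rank over $\mathbb{F}_q$ of the $m\times m$ matrix over $\mathbb{F}_q$ whose $j$-th column is the coordinate vector of $z_j$ in the fixed basis (this does not depend on the basis). *)

theory Defs
  imports "Jordan_Normal_Form.DL_Rank" "HOL-Library.Cardinality"
begin

text \<open>The base field F_q is a finite field type 'f; the extension field F_{q^m}
  is a finite field type 'k, and emb is an injective field homomorphism 'f to 'k.\<close>

definition field_emb :: "('f::field \<Rightarrow> 'k::field) \<Rightarrow> bool" where
  "field_emb emb \<longleftrightarrow> inj emb \<and> emb 0 = 0 \<and> emb 1 = 1 \<and>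
     (\<forall>x y. emb (x + y) = emb x + emb y) \<and> (\<forall>x y. emb (x * y) = emb x * emb y)"

definition lin_indep_Fq :: "('f::field \<Rightarrow> 'k::field) \<Rightarrow> nat \<Rightarrow> (nat \<Rightarrow> 'k) \<Rightarrow> bool" where
  "lin_indep_Fq emb m b \<longleftrightarrow>
     (\<forall>c :: nat \<Rightarrow> 'f. (\<Sum>j<m. emb (c j) * b j) = 0 \<longrightarrow> (\<forall>j<m. c j = 0))"

definition is_basis_Fq :: "('f::field \<Rightarrow> 'k::field) \<Rightarrow> nat \<Rightarrow> (nat \<Rightarrow> 'k) \<Rightarrow> bool" where
  "is_basis_Fq emb m b \<longleftrightarrow> lin_indep_Fq emb m b \<and>
     (\<forall>x. \<exists>c :: nat \<Rightarrow> 'f. x = (\<Sum>j<m. emb (c j) * b j))"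

definition coord :: "('f::field \<Rightarrow> 'k::field) \<Rightarrow> nat \<Rightarrow> (nat \<Rightarrow> 'k) \<Rightarrow> 'k \<Rightarrow> 'f vec" where
  "coord emb m b x = (THE v. v \<in> carrier_vec m \<and> x = (\<Sum>t<m. emb (v $ t) * b t))"

definition coord_mat :: "('f::field \<Rightarrow> 'k::field) \<Rightarrow> nat \<Rightarrow> (nat \<Rightarrow> 'k) \<Rightarrow> (nat \<Rightarrow> 'k) \<Rightarrow> 'f mat" where
  "coord_mat emb m b z = mat m m (\<lambda>(i, j). coord emb m b (z j) $ i)"

definition rk_Fq :: "('f::field \<Rightarrow> 'k::field) \<Rightarrow> nat \<Rightarrow> (nat \<Rightarrow> 'k) \<Rightarrow> (nat \<Rightarrow> 'k) \<Rightarrow> nat" where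
  "rk_Fq emb m b z = vec_space.rank m (coord_mat emb m b z)"

definition M_entry :: "nat \<Rightarrow> 'k::field \<Rightarrow> (nat \<Rightarrow> 'k) \<Rightarrow> nat \<Rightarrow> nat \<Rightarrow> nat \<Rightarrow> 'k" where
  "M_entry q \<gamma> \<beta> l i j = \<gamma> ^ (l * (\<Sum>t<i. q ^ t)) * (\<beta> j) ^ (q ^ i)"

definition lamM :: "nat \<Rightarrow> nat \<Rightarrow> 'k::field \<Rightarrow> (nat \<Rightarrow> 'k) \<Rightarrow> (nat \<Rightarrow> 'k) \<Rightarrow> nat \<Rightarrow> nat \<Rightarrow> 'k" where
  "lamM q k \<gamma> \<beta> lam l j = (\<Sum>i<k. lam i * M_entry q \<gamma> \<beta> l i j)"

end

theory Submission
  imports Defs "HOL-Computational_Algebra.Polynomial" "HOL-Algebra.Multiplicative_Group"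
begin

(* For c in F_{q^m} the map sigma_c y = c y^q is F_q-linear, and lambda^T M_l = (f_l(beta_j))_j
   with f_l = sum_i lambda_i sigma_{gamma^l}^i.  By rank-nullity q^m <= q^rk(lambda^T M_l) |ker f_l|,
   so it suffices to show prod_l |ker f_l| <= q^(k-1).  Read lambda as a skew polynomial
   sum_i lambda_i X^i, evaluated at X = sigma_{gamma^l} for all l at once, and induct on its degree.
   If some f_l0 has a root beta <> 0, then X - a with a = gamma^l0 beta^(q-1) is a right factor
   for every l: f_l = g_l o (sigma_{gamma^l} - a) with g of smaller degree.  The kernel of
   sigma_{gamma^l} - a has at most q elements, and is {0} for l <> l0 because the cosets
   gamma^l (F_{q^m}^* )^(q-1), l < q - 1, are pairwise distinct.  So each degree of lambda costs
   at most one factor q. *)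

lemma finite_field_power_card:
  fixes x :: "'a::{finite,field}"
  shows "x ^ CARD('a) = x"
proof (cases "x = 0")
  case False
  interpret G: group "mult_of (class_ring :: 'a ring)"
    by (rule field.field_mult_group[OF class_field])
  have "Coset.order (mult_of (class_ring :: 'a ring)) = CARD('a) - 1"
    by (simp add: Coset.order_def card_Diff_singleton)
  then have "x ^ (CARD('a) - 1) = 1"
    using G.pow_order_eq_1[of x] False by (simp add: nat_pow_mult_of class_ring_simps)
  then show ?thesis
    by (metis power_minus_mult finite_UNIV_card_ge_0 finite mult_1)
qed simp

lemma card_field_ge_2: "CARD('a::{finite,field}) \<ge> 2"
proof -
  have "card {0::'a, 1} \<le> CARD('a)" by (rule card_mono) auto
  then show ?thesis by simp
qed

(* (1 + X)^Q and X^Q + 1 agree on all Q points of the field and have degree Q. *)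
lemma of_nat_card_choose_eq_0:
  assumes "0 < i" "i < CARD('a::{finite,field})"
  shows "of_nat (CARD('a) choose i) = (0::'a)"
proof -
  define Q where "Q = CARD('a)"
  have Q2: "Q \<ge> 2" unfolding Q_def by (rule card_field_ge_2)
  define p1 :: "'a poly" where "p1 = [:1, 1:] ^ Q"
  define p2 :: "'a poly" where "p2 = Polynomial.monom 1 Q + 1"
  have "p1 = p2"
  proof (rule poly_eqI_degree_lead_coeff[where n = Q and A = UNIV])
    show "Polynomial.coeff p1 Q = Polynomial.coeff p2 Q"
      unfolding p1_def p2_def using Q2 by (simp add: coeff_linear_poly_power coeff_monom)
    show "Q \<le> card (UNIV::'a set)" unfolding Q_def by simp
    show "degree p1 \<le> Q"
      unfolding p1_def using degree_power_le[of "[:1, 1::'a:]" Q] by simp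
    show "degree p2 \<le> Q"
      unfolding p2_def by (rule order.trans[OF degree_add_le]) (auto simp: degree_monom_le)
    show "poly p1 z = poly p2 z" for z
      unfolding p1_def p2_def Q_def by (simp add: poly_monom finite_field_power_card add.commute)
  qed
  then have "Polynomial.coeff p1 i = Polynomial.coeff p2 i" by simp
  then show ?thesis
    unfolding p1_def p2_def Q_def[symmetric] using assms
    by (simp add: coeff_linear_poly_power coeff_monom Q_def)
qed

lemma field_hom_if_field_emb: "field_emb emb \<Longrightarrow> field_hom emb"
  by unfold_locales (simp_all add: field_emb_def)

lemma frobenius_add_if_field_emb:
  fixes emb :: "'f::{finite,field} \<Rightarrow> 'k::field"
  assumes "field_emb emb"
  shows "(x + y :: 'k) ^ CARD('f) = x ^ CARD('f) + y ^ CARD('f)"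
proof -
  interpret field_hom emb by (rule field_hom_if_field_emb[OF assms])
  define q where "q = CARD('f)"
  have "(x + y) ^ q = (\<Sum>i\<le>q. of_nat (q choose i) * x ^ i * y ^ (q - i))"
    by (rule binomial_ring)
  also have "\<dots> = (\<Sum>i\<in>{0, q}. of_nat (q choose i) * x ^ i * y ^ (q - i))"
  proof (intro sum.mono_neutral_right ballI)
    fix i assume "i \<in> {..q} - {0, q}"
    then have "0 < i" "i < CARD('f)" unfolding q_def by auto
    then have "of_nat (q choose i) = emb 0"
      unfolding q_def by (simp flip: hom_of_nat add: of_nat_card_choose_eq_0)
    then show "of_nat (q choose i) * x ^ i * y ^ (q - i) = 0" by simp
  qed auto
  finally show ?thesis
    using card_field_ge_2[where 'a='f] unfolding q_def by (simp add: add_ac)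
qed

lemma card_le_card_image_mult_card_kernel:
  fixes H :: "'a::{ab_group_add,finite} \<Rightarrow> 'b::ab_group_add"
  assumes add: "\<And>x y. H (x + y) = H x + H y"
  shows "card A \<le> card (H ` A) * card {x. H x = 0}"
proof -
  have diff: "H (x - y) = H x - H y" for x y
    using add[of "x - y" y] by (simp add: eq_diff_eq)
  define s where "s = inv_into A H"
  define \<phi> where "\<phi> y = (H y, y - s (H y))" for y
  have "inj_on \<phi> A"
    by (rule inj_onI) (auto simp: \<phi>_def)
  moreover have "\<phi> ` A \<subseteq> H ` A \<times> {x. H x = 0}"
  proof
    fix z assume "z \<in> \<phi> ` A"
    then obtain y where y: "y \<in> A" "z = \<phi> y" by blast
    have "H (s (H y)) = H y" unfolding s_def using y(1) by (simp add: f_inv_into_f)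
    then show "z \<in> H ` A \<times> {x. H x = 0}" using y by (simp add: \<phi>_def diff)
  qed
  ultimately have "card A \<le> card (H ` A \<times> {x. H x = 0})"
    by (intro card_inj_on_le) auto
  then show ?thesis by (simp add: card_cartesian_product)
qed

lemma card_roots_comp_le:
  fixes H :: "'a::{ab_group_add,finite} \<Rightarrow> 'b::{ab_group_add,finite}"
  assumes add: "\<And>x y. H (x + y) = H x + H y"
  shows "card {y. G (H y) = 0} \<le> card {z. G z = (0::'c::zero)} * card {y. H y = 0}"
proof -
  have "card {y. G (H y) = 0} \<le> card (H ` {y. G (H y) = 0}) * card {y. H y = 0}"
    by (rule card_le_card_image_mult_card_kernel[OF add])
  also have "\<dots> \<le> card {z. G z = 0} * card {y. H y = 0}"
    by (intro mult_le_mono1 card_mono) auto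
  finally show ?thesis .
qed

lemma card_roots_binomial_le:
  fixes c a :: "'a::idom"
  assumes "c \<noteq> 0" "q \<ge> 2"
  shows "card {y. c * y ^ q - a * y = 0} \<le> q"
proof -
  define P where "P = Polynomial.monom c q - [:0, a:]"
  have poly: "poly P y = c * y ^ q - a * y" for y
    unfolding P_def by (simp add: poly_monom)
  have "Polynomial.coeff P q = c"
    unfolding P_def using assms(2) by (cases q) (auto simp: coeff_monom coeff_pCons split: nat.splits)
  then have "P \<noteq> 0" using assms(1) by auto
  then have "card {y. poly P y = 0} \<le> degree P" by (rule card_poly_roots_bound)
  moreover have "degree P \<le> q"
    unfolding P_def using assms(2)
    by (intro order.trans[OF degree_diff_le_max]) (auto simp: degree_monom_le degree_pCons_le)
  ultimately show ?thesis unfolding poly by simp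
qed

definition twist :: "nat \<Rightarrow> 'k::field \<Rightarrow> 'k \<Rightarrow> 'k" where
  "twist q c y = c * y ^ q"

definition skew_eval :: "nat \<Rightarrow> (nat \<Rightarrow> 'k::field) \<Rightarrow> nat \<Rightarrow> 'k \<Rightarrow> 'k \<Rightarrow> 'k" where
  "skew_eval q lam d c y = (\<Sum>i<d. lam i * (twist q c ^^ i) y)"

lemma twist_iter_Suc: "(twist q c ^^ Suc i) y = c * ((twist q c ^^ i) y) ^ q"
  unfolding funpow.simps(2) comp_def by (rule twist_def)

lemma twist_iter_mult: "(twist q c ^^ i) (a * y) = a ^ (q ^ i) * (twist q c ^^ i) y"
proof (induction i)
  case (Suc i)
  have "(twist q c ^^ Suc i) (a * y) = c * (a ^ (q ^ i) * (twist q c ^^ i) y) ^ q"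
    by (simp only: twist_iter_Suc Suc.IH)
  also have "\<dots> = a ^ (q ^ i * q) * (c * ((twist q c ^^ i) y) ^ q)"
    using power_mult[of a "q ^ i" q, symmetric] by (simp only: power_mult_distrib mult_ac)
  also have "\<dots> = a ^ (q ^ Suc i) * (twist q c ^^ Suc i) y"
    by (simp only: twist_iter_Suc power_Suc mult.commute)
  finally show ?case .
qed simp

lemma twist_iter_eq: "(twist q c ^^ i) y = c ^ (\<Sum>t<i. q ^ t) * y ^ (q ^ i)"
proof (induction i arbitrary: y)
  case (Suc i)
  have "(twist q c ^^ Suc i) y = (twist q c ^^ i) (c * y ^ q)"
    by (simp only: funpow_Suc_right comp_def twist_def)
  also have "\<dots> = c ^ (\<Sum>t<Suc i. q ^ t) * y ^ (q ^ Suc i)"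
    by (simp add: twist_iter_mult Suc power_add power_mult mult_ac)
  finally show ?case .
qed simp

lemma lamM_eq_skew_eval: "lamM q k \<gamma> \<beta> lam l = (\<lambda>j. skew_eval q lam k (\<gamma> ^ l) (\<beta> j))"
  unfolding lamM_def M_entry_def skew_eval_def twist_iter_eq by (simp add: power_mult)

locale Fq_extension =
  fixes emb :: "'f::{finite,field} \<Rightarrow> 'k::{finite,field}" and q :: nat
  assumes field_emb: "field_emb emb" and q_def: "q = CARD('f)"
begin

sublocale field_hom emb
  by (rule field_hom_if_field_emb[OF field_emb])

lemma q_ge_2: "q \<ge> 2"
  unfolding q_def by (rule card_field_ge_2)

lemma frobenius_add: "(x + y :: 'k) ^ q = x ^ q + y ^ q"
  unfolding q_def by (rule frobenius_add_if_field_emb[OF field_emb])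

lemma frobenius_diff: "(x - y :: 'k) ^ q = x ^ q - y ^ q"
  using frobenius_add[of "x - y" y] by (simp add: eq_diff_eq)

lemma emb_power_q_power: "emb a ^ (q ^ i) = emb a"
proof (induction i)
  case (Suc i)
  have "emb a ^ q = emb a"
    unfolding q_def by (simp flip: hom_power add: finite_field_power_card)
  then show ?case
    using Suc by (simp add: power_mult flip: mult.commute[of q])
qed simp

lemma twist_add: "twist q (c::'k) (x + y) = twist q c x + twist q c y"
  unfolding twist_def by (simp add: frobenius_add distrib_left)

lemma twist_diff: "twist q (c::'k) (x - y) = twist q c x - twist q c y"
  unfolding twist_def by (simp add: frobenius_diff right_diff_distrib)

lemma twist_iter_add: "(twist q (c::'k) ^^ i) (x + y) = (twist q c ^^ i) x + (twist q c ^^ i) y"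
  by (induction i) (simp_all add: twist_add)

lemma twist_iter_diff: "(twist q (c::'k) ^^ i) (x - y) = (twist q c ^^ i) x - (twist q c ^^ i) y"
  by (induction i) (simp_all add: twist_diff)

lemma twist_iter_zero: "(twist q (c::'k) ^^ i) 0 = 0"
  using twist_iter_diff[where x = 0 and y = 0] by simp

lemma skew_eval_add: "skew_eval q lam d (c::'k) (x + y) = skew_eval q lam d c x + skew_eval q lam d c y"
  unfolding skew_eval_def by (simp add: twist_iter_add distrib_left sum.distrib)

lemma skew_eval_zero: "skew_eval q lam d (c::'k) 0 = 0"
  unfolding skew_eval_def by (simp add: twist_iter_zero)

lemma skew_eval_emb_mult: "skew_eval q lam d (c::'k) (emb a * y) = emb a * skew_eval q lam d c y"
  unfolding skew_eval_def twist_iter_mult emb_power_q_power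
  by (simp add: sum_distrib_left mult.left_commute)

lemma twist_iter_twist_minus:
  "(twist q (c::'k) ^^ i) (twist q c y - a * y) = (twist q c ^^ Suc i) y - a ^ (q ^ i) * (twist q c ^^ i) y"
proof -
  have "(twist q c ^^ Suc i) y = (twist q c ^^ i) (twist q c y)"
    by (simp only: funpow_Suc_right comp_def)
  then show ?thesis by (simp add: twist_iter_diff twist_iter_mult)
qed

(* Right division by X - a in the skew polynomial ring, where X a = a^q X: the quotient mu
   does not depend on c.  The step uses X^(e+1) = X^e (X - a) + a^(q^e) X^e. *)
lemma skew_eval_right_division:
  "\<exists>\<mu> r. (\<forall>c y. skew_eval q (lam :: nat \<Rightarrow> 'k) (Suc d) c y = skew_eval q \<mu> d c (twist q c y - a * y) + r * y) \<and>
         (d > 0 \<longrightarrow> \<mu> (d - 1) = lam d)"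
proof (induction d arbitrary: lam)
  case 0
  show ?case by (intro exI[of _ "\<lambda>_. 0"] exI[of _ "lam 0"]) (simp add: skew_eval_def)
next
  case (Suc e)
  define lam' where "lam' = lam(e := lam e + lam (Suc e) * a ^ (q ^ e))"
  obtain \<mu>' r
    where IH: "\<And>c y. skew_eval q lam' (Suc e) c y = skew_eval q \<mu>' e c (twist q c y - a * y) + r * y"
    using Suc.IH[of lam'] by blast
  define \<mu> where "\<mu> = \<mu>'(e := lam (Suc e))"
  have "skew_eval q lam (Suc (Suc e)) c y = skew_eval q \<mu> (Suc e) c (twist q c y - a * y) + r * y"
    for c y
  proof -
    let ?T = "\<lambda>i. (twist q c ^^ i)"
    have "skew_eval q lam (Suc (Suc e)) c y
        = skew_eval q lam' (Suc e) c y + lam (Suc e) * (?T (Suc e) y - a ^ (q ^ e) * ?T e y)"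
      unfolding skew_eval_def lam'_def by (simp add: algebra_simps)
    also have "\<dots> = skew_eval q \<mu> (Suc e) c (twist q c y - a * y) + r * y"
      unfolding IH twist_iter_twist_minus[symmetric]
      by (simp add: skew_eval_def \<mu>_def algebra_simps)
    finally show ?thesis .
  qed
  then show ?case unfolding \<mu>_def by auto
qed

end

lemma prod_card_roots_le_1:
  fixes f :: "nat \<Rightarrow> 'a \<Rightarrow> 'b::zero"
  assumes "\<And>l y. l \<in> L \<Longrightarrow> f l y = 0 \<Longrightarrow> y = z"
  shows "(\<Prod>l\<in>L. card {y. f l y = 0}) \<le> 1"
proof -
  have "card {y. f l y = 0} \<le> 1" if "l \<in> L" for l
    using card_mono[of "{z}" "{y. f l y = 0}"] assms[OF that] by auto
  then have "(\<Prod>l\<in>L. card {y. f l y = 0}) \<le> (\<Prod>l\<in>L. 1)"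
    by (intro prod_mono) auto
  then show ?thesis by simp
qed

locale Fq_extension_gen = Fq_extension emb q
  for emb :: "'f::{finite,field} \<Rightarrow> 'k::{finite,field}" and q :: nat +
  fixes m :: nat and \<gamma> :: 'k
  assumes card_k: "CARD('k) = q ^ m"
    and gamma_nonzero: "\<gamma> \<noteq> 0" and gamma_gen: "\<forall>x::'k. x \<noteq> 0 \<longrightarrow> (\<exists>e::nat. x = \<gamma> ^ e)"
begin

lemma card_k_ge_2: "q ^ m \<ge> 2"
  using card_k card_field_ge_2[where 'a='k] by simp

lemma gamma_power_order: "\<gamma> ^ (q ^ m - 1) = 1"
proof -
  have "\<gamma> ^ (q ^ m - 1) * \<gamma> = \<gamma> ^ CARD('k)"
    unfolding card_k by (rule power_minus_mult) (use q_ge_2 in simp)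
  then show ?thesis
    using gamma_nonzero by (simp add: finite_field_power_card)
qed

lemma gamma_power_mod: "\<gamma> ^ e = \<gamma> ^ (e mod (q ^ m - 1))"
proof -
  have "\<gamma> ^ e = \<gamma> ^ ((q ^ m - 1) * (e div (q ^ m - 1)) + e mod (q ^ m - 1))" by simp
  also have "\<dots> = \<gamma> ^ (e mod (q ^ m - 1))"
    by (simp only: power_add power_mult gamma_power_order power_one mult_1)
  finally show ?thesis .
qed

lemma gamma_power_eq_imp_mod_eq:
  assumes "\<gamma> ^ a = \<gamma> ^ b"
  shows "a mod (q ^ m - 1) = b mod (q ^ m - 1)"
proof -
  define N where "N = q ^ m - 1"
  have N_pos: "N > 0" unfolding N_def using card_k_ge_2 by simp
  have "(\<lambda>e. \<gamma> ^ e) ` {..<N} = UNIV - {0}"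
  proof
    show "(\<lambda>e. \<gamma> ^ e) ` {..<N} \<subseteq> UNIV - {0}" using gamma_nonzero by auto
    show "UNIV - {0} \<subseteq> (\<lambda>e. \<gamma> ^ e) ` {..<N}"
    proof
      fix x :: 'k assume "x \<in> UNIV - {0}"
      then obtain e where "x = \<gamma> ^ (e mod N)" using gamma_gen gamma_power_mod unfolding N_def by auto
      then show "x \<in> (\<lambda>e. \<gamma> ^ e) ` {..<N}" using N_pos by auto
    qed
  qed
  moreover have "card (UNIV - {0::'k}) = N"
    unfolding N_def using card_k by (simp add: card_Diff_singleton)
  ultimately have "inj_on (\<lambda>e. \<gamma> ^ e) {..<N}"
    by (intro eq_card_imp_inj_on) simp_all
  moreover have "\<gamma> ^ (a mod N) = \<gamma> ^ (b mod N)"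
    using assms gamma_power_mod unfolding N_def by metis
  ultimately show ?thesis
    unfolding N_def[symmetric] using N_pos by (auto dest: inj_onD)
qed

lemma q_minus_1_dvd: "(q - 1) dvd (q ^ m - 1)"
proof -
  have "int (q ^ m - 1) = (int q - 1) * (\<Sum>i<m. int q ^ i)"
    using power_diff_1_eq[of "int q" m] q_ge_2 by (simp add: of_nat_diff)
  then have "int (q - 1) dvd int (q ^ m - 1)"
    using q_ge_2 by (simp add: of_nat_diff)
  then show ?thesis by simp
qed

lemma gamma_power_coset_eq_imp_eq:
  assumes "l < q - 1" "l' < q - 1" "y \<noteq> 0" "z \<noteq> 0"
    and eq: "\<gamma> ^ l * y ^ (q - 1) = \<gamma> ^ l' * z ^ (q - 1)"
  shows "l = l'"
proof -
  obtain e1 e2 where e: "y = \<gamma> ^ e1" "z = \<gamma> ^ e2" using gamma_gen assms(3,4) by blast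
  have "\<gamma> ^ (l + e1 * (q - 1)) = \<gamma> ^ (l' + e2 * (q - 1))"
    using eq unfolding e by (simp add: power_add power_mult)
  then have "(l + e1 * (q - 1)) mod (q ^ m - 1) = (l' + e2 * (q - 1)) mod (q ^ m - 1)"
    by (rule gamma_power_eq_imp_mod_eq)
  then have "(l + e1 * (q - 1)) mod (q ^ m - 1) mod (q - 1) = (l' + e2 * (q - 1)) mod (q ^ m - 1) mod (q - 1)"
    by (rule arg_cong)
  then have "(l + e1 * (q - 1)) mod (q - 1) = (l' + e2 * (q - 1)) mod (q - 1)"
    using q_minus_1_dvd by (simp add: mod_mod_cancel)
  then show ?thesis using assms(1,2) by simp
qed

lemma prod_card_roots_twist_minus_le:
  assumes l0: "l0 < q - 1" and "\<beta> \<noteq> 0"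
  defines "a \<equiv> \<gamma> ^ l0 * \<beta> ^ (q - 1)"
  shows "(\<Prod>l<q - 1. card {y. twist q (\<gamma> ^ l) y - a * y = 0}) \<le> q"
proof -
  have trivial: "y = 0" if "l < q - 1" "l \<noteq> l0" "twist q (\<gamma> ^ l) y - a * y = 0" for l y
  proof (rule ccontr)
    assume "y \<noteq> 0"
    moreover have "y ^ q = y ^ (q - 1) * y" using q_ge_2 by (simp flip: power_Suc2)
    ultimately have "\<gamma> ^ l * y ^ (q - 1) = \<gamma> ^ l0 * \<beta> ^ (q - 1)"
      using that(3) unfolding twist_def a_def by (simp add: mult_ac)
    then show False
      using gamma_power_coset_eq_imp_eq[OF that(1) l0 \<open>y \<noteq> 0\<close> \<open>\<beta> \<noteq> 0\<close>] that(2) by simp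
  qed
  have "(\<Prod>l<q - 1. card {y. twist q (\<gamma> ^ l) y - a * y = 0})
      = card {y. twist q (\<gamma> ^ l0) y - a * y = 0} * (\<Prod>l\<in>{..<q - 1} - {l0}. card {y. twist q (\<gamma> ^ l) y - a * y = 0})"
    using l0 by (simp add: prod.remove)
  also have "\<dots> \<le> q * 1"
  proof (rule mult_le_mono)
    show "card {y. twist q (\<gamma> ^ l0) y - a * y = 0} \<le> q"
      unfolding twist_def by (rule card_roots_binomial_le) (simp_all add: gamma_nonzero q_ge_2)
    show "(\<Prod>l\<in>{..<q - 1} - {l0}. card {y. twist q (\<gamma> ^ l) y - a * y = 0}) \<le> 1"
      by (rule prod_card_roots_le_1) (use trivial in auto)
  qed
  finally show ?thesis by simp
qed

lemma prod_card_skew_roots_step: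
  assumes l0: "l0 < q - 1" and "\<beta> \<noteq> 0" and root: "skew_eval q lam (Suc d) (\<gamma> ^ l0) \<beta> = 0"
  obtains \<mu> where "d > 0 \<longrightarrow> \<mu> (d - 1) = lam d"
    and "(\<Prod>l<q - 1. card {y. skew_eval q lam (Suc d) (\<gamma> ^ l) y = 0})
         \<le> (\<Prod>l<q - 1. card {z. skew_eval q \<mu> d (\<gamma> ^ l) z = 0}) * q"
proof -
  define a where "a = \<gamma> ^ l0 * \<beta> ^ (q - 1)"
  obtain \<mu> r where lead: "d > 0 \<longrightarrow> \<mu> (d - 1) = lam d"
    and div: "\<And>c y. skew_eval q lam (Suc d) c y = skew_eval q \<mu> d c (twist q c y - a * y) + r * y"
    using skew_eval_right_division[where lam = lam and d = d and a = a] by blast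
  have "twist q (\<gamma> ^ l0) \<beta> - a * \<beta> = 0"
    unfolding twist_def a_def using q_ge_2 by (simp add: mult.assoc flip: power_Suc2)
  then have "r = 0"
    using root div[of "\<gamma> ^ l0" \<beta>] \<open>\<beta> \<noteq> 0\<close> by (simp add: skew_eval_zero)
  then have roots: "{y. skew_eval q lam (Suc d) (\<gamma> ^ l) y = 0}
      = {y. skew_eval q \<mu> d (\<gamma> ^ l) (twist q (\<gamma> ^ l) y - a * y) = 0}" for l
    using div by simp
  have additive: "twist q c (x + y) - a * (x + y) = (twist q c x - a * x) + (twist q c y - a * y)"
    for c x y :: 'k
    by (simp add: twist_add algebra_simps)
  have "(\<Prod>l<q - 1. card {y. skew_eval q lam (Suc d) (\<gamma> ^ l) y = 0})
      \<le> (\<Prod>l<q - 1. card {z. skew_eval q \<mu> d (\<gamma> ^ l) z = 0} * card {y. twist q (\<gamma> ^ l) y - a * y = 0})"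
    unfolding roots by (intro prod_mono conjI card_roots_comp_le additive) simp
  also have "\<dots> = (\<Prod>l<q - 1. card {z. skew_eval q \<mu> d (\<gamma> ^ l) z = 0})
      * (\<Prod>l<q - 1. card {y. twist q (\<gamma> ^ l) y - a * y = 0})"
    by (rule prod.distrib)
  also have "\<dots> \<le> (\<Prod>l<q - 1. card {z. skew_eval q \<mu> d (\<gamma> ^ l) z = 0}) * q"
    using prod_card_roots_twist_minus_le[OF l0 \<open>\<beta> \<noteq> 0\<close>] unfolding a_def by (rule mult_le_mono2)
  finally show ?thesis using lead that by blast
qed

lemma prod_card_skew_roots_le:
  assumes "lam d \<noteq> 0"
  shows "(\<Prod>l<q - 1. card {y. skew_eval q lam (Suc d) (\<gamma> ^ l) y = 0}) \<le> q ^ d"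
  using assms
proof (induction d arbitrary: lam)
  case 0
  have "(\<Prod>l<q - 1. card {y. skew_eval q lam (Suc 0) (\<gamma> ^ l) y = 0}) \<le> 1"
    by (rule prod_card_roots_le_1[where z = 0]) (use 0 in \<open>simp add: skew_eval_def\<close>)
  then show ?case by simp
next
  case (Suc e)
  show ?case
  proof (cases "\<exists>l0<q - 1. \<exists>\<beta>. \<beta> \<noteq> 0 \<and> skew_eval q lam (Suc (Suc e)) (\<gamma> ^ l0) \<beta> = 0")
    case True
    then obtain l0 \<beta> where "l0 < q - 1" "\<beta> \<noteq> 0" "skew_eval q lam (Suc (Suc e)) (\<gamma> ^ l0) \<beta> = 0"
      by blast
    then obtain \<mu> where lead: "\<mu> e = lam (Suc e)"
      and step: "(\<Prod>l<q - 1. card {y. skew_eval q lam (Suc (Suc e)) (\<gamma> ^ l) y = 0})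
                 \<le> (\<Prod>l<q - 1. card {z. skew_eval q \<mu> (Suc e) (\<gamma> ^ l) z = 0}) * q"
      by (rule prod_card_skew_roots_step) auto
    have "(\<Prod>l<q - 1. card {z. skew_eval q \<mu> (Suc e) (\<gamma> ^ l) z = 0}) \<le> q ^ e"
      using Suc.IH[of \<mu>] Suc.prems lead by simp
    then show ?thesis
      using order_trans[OF step mult_le_mono1] by (simp only: power_Suc2)
  next
    case False
    then have "(\<Prod>l<q - 1. card {y. skew_eval q lam (Suc (Suc e)) (\<gamma> ^ l) y = 0}) \<le> 1"
      by (intro prod_card_roots_le_1[where z = 0]) auto
    also have "1 \<le> q ^ Suc e" using q_ge_2 by simp
    finally show ?thesis .
  qed
qed

lemma prod_card_skew_roots_le_pow:
  assumes "\<exists>i<k. lam i \<noteq> 0"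
  shows "(\<Prod>l<q - 1. card {y. skew_eval q lam k (\<gamma> ^ l) y = 0}) \<le> q ^ (k - 1)"
proof -
  define S where "S = {i. i < k \<and> lam i \<noteq> 0}"
  have "finite S" "S \<noteq> {}" unfolding S_def using assms by auto
  define d where "d = Max S"
  have "d \<in> S" unfolding d_def using \<open>finite S\<close> \<open>S \<noteq> {}\<close> by (rule Max_in)
  then have "d < k" "lam d \<noteq> 0" unfolding S_def by auto
  have "lam i = 0" if "d < i" "i < k" for i
  proof (rule ccontr)
    assume "lam i \<noteq> 0"
    then have "i \<le> d" unfolding d_def using Max_ge[OF \<open>finite S\<close>, of i] that(2) S_def by blast
    then show False using that(1) by simp
  qed
  then have "skew_eval q lam k c y = skew_eval q lam (Suc d) c y" for c y
    unfolding skew_eval_def by (intro sum.mono_neutral_right) (use \<open>d < k\<close> in auto)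
  then have "(\<Prod>l<q - 1. card {y. skew_eval q lam k (\<gamma> ^ l) y = 0}) \<le> q ^ d"
    using prod_card_skew_roots_le[where lam = lam and d = d] \<open>lam d \<noteq> 0\<close> by simp
  also have "\<dots> \<le> q ^ (k - 1)" using \<open>d < k\<close> q_ge_2 by (intro power_increasing) auto
  finally show ?thesis .
qed

end

lemma (in vectorspace) card_carrier_le:
  assumes "finite (carrier K)" and fin_dim
  shows "card (carrier V) \<le> card (carrier K) ^ dim"
proof -
  obtain B where B: "finite B" "basis B" using finite_basis_exists[OF \<open>fin_dim\<close>] by blast
  have B_carrier: "B \<subseteq> carrier V" and span_B: "span B = carrier V"
    using B(2) unfolding basis_def by auto
  have "carrier V \<subseteq> (\<lambda>a. lincomb a B) ` (B \<rightarrow>\<^sub>E carrier K)"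
  proof
    fix v assume "v \<in> carrier V"
    then obtain a where a: "a \<in> B \<rightarrow> carrier K" "lincomb a B = v"
      using finite_in_span[OF B(1) B_carrier] span_B by auto
    have "lincomb (restrict a B) B = lincomb a B"
      by (rule lincomb_cong[OF refl B_carrier]) (use a in auto)
    moreover have "restrict a B \<in> B \<rightarrow>\<^sub>E carrier K" using a by auto
    ultimately show "v \<in> (\<lambda>a. lincomb a B) ` (B \<rightarrow>\<^sub>E carrier K)" using a(2) by (metis image_eqI)
  qed
  then have "card (carrier V) \<le> card ((\<lambda>a. lincomb a B) ` (B \<rightarrow>\<^sub>E carrier K))"
    by (intro card_mono finite_imageI finite_PiE B(1) assms(1))
  also have "\<dots> \<le> card (B \<rightarrow>\<^sub>E carrier K)"
    by (rule card_image_le) (intro finite_PiE B(1) assms(1))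
  also have "\<dots> = card (carrier K) ^ card B"
    by (simp only: card_PiE B(1) prod_constant)
  finally show ?thesis by (simp only: dim_basis[OF B])
qed

lemma finite_carrier_vec: "finite (carrier_vec n :: 'a::finite vec set)"
proof -
  have "carrier_vec n \<subseteq> (\<lambda>c. vec n c) ` ({..<n} \<rightarrow>\<^sub>E (UNIV::'a set))"
  proof
    fix v :: "'a vec" assume v: "v \<in> carrier_vec n"
    have "v = vec n (restrict (\<lambda>i. v $ i) {..<n})" using v by (intro eq_vecI) auto
    then show "v \<in> (\<lambda>c. vec n c) ` ({..<n} \<rightarrow>\<^sub>E (UNIV::'a set))" by auto
  qed
  then show ?thesis by (rule finite_subset) (intro finite_imageI finite_PiE; simp)
qed

lemma card_col_space_le:
  fixes A :: "'a::{finite,field} mat"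
  assumes A: "A \<in> carrier_mat n nc"
  shows "card ((\<lambda>x. A *\<^sub>v x) ` carrier_vec nc) \<le> CARD('a) ^ vec_space.rank n A"
proof -
  interpret vec_space "TYPE('a)" n .
  let ?V = "vs (span (set (cols A)))"
  have "set (cols A) \<subseteq> carrier_vec n" using A by (auto simp: cols_def)
  then have "vectorspace class_ring ?V"
    by (intro subspace_is_vs span_is_subspace)
  then have "card (carrier ?V) \<le> card (carrier (class_ring :: 'a ring)) ^ vectorspace.dim class_ring ?V"
    by (rule vectorspace.card_carrier_le) (simp_all add: fin_dim_span_cols[OF A])
  moreover have "carrier ?V = (\<lambda>x. A *\<^sub>v x) ` carrier_vec nc"
    using col_space_eq[OF A] A unfolding col_space_def by (auto intro: mult_mat_vec_carrier)
  ultimately show ?thesis unfolding rank_def by simp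
qed

lemma is_basis_Fq_ex1_coord:
  assumes "field_emb emb" and basis: "is_basis_Fq emb m b"
  shows "\<exists>!v. v \<in> carrier_vec m \<and> x = (\<Sum>t<m. emb (v $ t) * b t)"
proof -
  interpret field_hom emb by (rule field_hom_if_field_emb[OF assms(1)])
  obtain c where c: "x = (\<Sum>j<m. emb (c j) * b j)"
    using basis unfolding is_basis_Fq_def by blast
  have "vec m c \<in> carrier_vec m \<and> x = (\<Sum>t<m. emb (vec m c $ t) * b t)"
    unfolding c by (auto intro: sum.cong)
  moreover have "v = w"
    if "v \<in> carrier_vec m" "x = (\<Sum>t<m. emb (v $ t) * b t)"
      and "w \<in> carrier_vec m" "x = (\<Sum>t<m. emb (w $ t) * b t)" for v w
  proof -
    have "(\<Sum>t<m. emb (v $ t - w $ t) * b t) = 0"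
      using that by (simp add: hom_distribs left_diff_distrib sum_subtractf)
    moreover have "lin_indep_Fq emb m b" using basis unfolding is_basis_Fq_def by simp
    ultimately have "\<forall>t<m. v $ t - w $ t = 0"
      unfolding lin_indep_Fq_def by (auto dest: spec[of _ "\<lambda>t. v $ t - w $ t"])
    then show "v = w" using that(1,3) by (intro eq_vecI) auto
  qed
  ultimately show ?thesis by blast
qed

lemma coord_spec:
  assumes "field_emb emb" and "is_basis_Fq emb m b"
  shows "coord emb m b x \<in> carrier_vec m \<and> x = (\<Sum>t<m. emb (coord emb m b x $ t) * b t)"
  unfolding coord_def by (rule theI'[OF is_basis_Fq_ex1_coord[OF assms]])

lemma coord_eqI:
  assumes "field_emb emb" and "is_basis_Fq emb m b"
    and "v \<in> carrier_vec m" "x = (\<Sum>t<m. emb (v $ t) * b t)"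
  shows "coord emb m b x = v"
  unfolding coord_def by (rule the1_equality[OF is_basis_Fq_ex1_coord[OF assms(1,2)]]) (use assms in blast)

lemma inj_coord:
  assumes "field_emb emb" and "is_basis_Fq emb m b"
  shows "inj (coord emb m b)"
  by (rule injI) (metis coord_spec[OF assms])

lemma coord_lincomb:
  assumes "field_emb emb" and "is_basis_Fq emb m b"
  shows "coord emb m b (\<Sum>j<m. emb (c j) * z j) = vec m (\<lambda>i. \<Sum>j<m. c j * coord emb m b (z j) $ i)"
proof (rule coord_eqI[OF assms])
  interpret field_hom emb by (rule field_hom_if_field_emb[OF assms(1)])
  show "vec m (\<lambda>i. \<Sum>j<m. c j * coord emb m b (z j) $ i) \<in> carrier_vec m" by simp
  have "(\<Sum>t<m. emb (vec m (\<lambda>i. \<Sum>j<m. c j * coord emb m b (z j) $ i) $ t) * b t)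
      = (\<Sum>t<m. \<Sum>j<m. emb (c j) * (emb (coord emb m b (z j) $ t) * b t))"
    by (simp add: hom_distribs sum_distrib_right mult.assoc)
  also have "\<dots> = (\<Sum>j<m. \<Sum>t<m. emb (c j) * (emb (coord emb m b (z j) $ t) * b t))"
    by (rule sum.swap)
  also have "\<dots> = (\<Sum>j<m. emb (c j) * (\<Sum>t<m. emb (coord emb m b (z j) $ t) * b t))"
    by (simp add: sum_distrib_left)
  also have "\<dots> = (\<Sum>j<m. emb (c j) * z j)"
    using coord_spec[OF assms] by simp
  finally show "(\<Sum>j<m. emb (c j) * z j)
      = (\<Sum>t<m. emb (vec m (\<lambda>i. \<Sum>j<m. c j * coord emb m b (z j) $ i) $ t) * b t)" ..
qed

lemma lin_indep_Fq_spans: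
  fixes emb :: "'f::{finite,field} \<Rightarrow> 'k::{finite,field}"
  assumes "field_emb emb" and indep: "lin_indep_Fq emb m \<beta>" and card_k: "CARD('k) = CARD('f) ^ m"
  shows "\<exists>c. y = (\<Sum>j<m. emb (c j) * \<beta> j)"
proof -
  interpret field_hom emb by (rule field_hom_if_field_emb[OF assms(1)])
  define P where "P = {..<m} \<rightarrow>\<^sub>E (UNIV::'f set)"
  define \<phi> where "\<phi> c = (\<Sum>j<m. emb (c j) * \<beta> j)" for c
  have "inj_on \<phi> P"
  proof (rule inj_onI)
    fix c c' assume "c \<in> P" "c' \<in> P" "\<phi> c = \<phi> c'"
    then have "(\<Sum>j<m. emb (c j - c' j) * \<beta> j) = 0"
      unfolding \<phi>_def by (simp add: hom_distribs left_diff_distrib sum_subtractf)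
    then have "\<forall>j<m. c j - c' j = 0"
      using indep unfolding lin_indep_Fq_def by (auto dest: spec[of _ "\<lambda>j. c j - c' j"])
    then show "c = c'"
      using \<open>c \<in> P\<close> \<open>c' \<in> P\<close> unfolding P_def by (intro extensionalityI[of _ "{..<m}"]) (auto simp: PiE_iff)
  qed
  then have "card (\<phi> ` P) = CARD('k)"
    unfolding card_k by (simp add: card_image P_def card_PiE)
  then have "\<phi> ` P = UNIV" by (intro card_eq_UNIV_imp_eq_UNIV) simp_all
  then show ?thesis unfolding \<phi>_def by blast
qed

lemma (in Fq_extension) card_le_power_rk_Fq_mult_card_kernel:
  fixes f :: "'k \<Rightarrow> 'k"
  assumes basis: "is_basis_Fq emb m b" and beta: "lin_indep_Fq emb m \<beta>" and card_k: "CARD('k) = q ^ m"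
    and add: "\<And>x y. f (x + y) = f x + f y" and homog: "\<And>a y. f (emb a * y) = emb a * f y"
  shows "q ^ m \<le> q ^ rk_Fq emb m b (\<lambda>j. f (\<beta> j)) * card {y. f y = 0}"
proof -
  define A where "A = coord_mat emb m b (\<lambda>j. f (\<beta> j))"
  have A: "A \<in> carrier_mat m m" unfolding A_def coord_mat_def by simp
  have "f 0 = 0" using homog[of 0 0] by simp
  then have f_lincomb: "f (\<Sum>j\<in>J. emb (c j) * z j) = (\<Sum>j\<in>J. emb (c j) * f (z j))" for J c z
    by (induction J rule: infinite_finite_induct) (simp_all add: add homog)
  have "coord emb m b ` range f \<subseteq> (\<lambda>x. A *\<^sub>v x) ` carrier_vec m"
  proof
    fix w assume "w \<in> coord emb m b ` range f"
    then obtain y where w: "w = coord emb m b (f y)" by blast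
    obtain c where "y = (\<Sum>j<m. emb (c j) * \<beta> j)"
      using lin_indep_Fq_spans[OF field_emb beta] card_k q_def by blast
    then have "w = vec m (\<lambda>i. \<Sum>j<m. c j * coord emb m b (f (\<beta> j)) $ i)"
      unfolding w by (simp only: f_lincomb coord_lincomb[OF field_emb basis])
    also have "\<dots> = A *\<^sub>v vec m c"
      by (rule eq_vecI)
        (auto simp: A_def coord_mat_def scalar_prod_def atLeast0LessThan mult.commute intro!: sum.cong)
    finally show "w \<in> (\<lambda>x. A *\<^sub>v x) ` carrier_vec m" by auto
  qed
  then have "card (range f) \<le> card ((\<lambda>x. A *\<^sub>v x) ` carrier_vec m)"
    using inj_coord[OF field_emb basis]
    by (intro card_inj_on_le finite_imageI finite_carrier_vec) (auto intro: inj_on_subset)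
  also have "\<dots> \<le> q ^ rk_Fq emb m b (\<lambda>j. f (\<beta> j))"
    unfolding rk_Fq_def A_def[symmetric] q_def by (rule card_col_space_le[OF A])
  finally have "card (range f) * card {y. f y = 0} \<le> q ^ rk_Fq emb m b (\<lambda>j. f (\<beta> j)) * card {y. f y = 0}"
    by (rule mult_le_mono1)
  moreover have "q ^ m \<le> card (range f) * card {y. f y = 0}"
    using card_le_card_image_mult_card_kernel[OF add, of UNIV] card_k by simp
  ultimately show ?thesis by linarith
qed

theorem theoremF2:
  fixes emb :: "'f::{finite,field} \<Rightarrow> 'k::{finite,field}"
    and q m n k :: nat and \<gamma> :: 'k and \<beta> b lam :: "nat \<Rightarrow> 'k"
  assumes emb: "field_emb emb"
    and q: "q = CARD('f)"
    and m: "m \<ge> 1"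
    and card_k: "CARD('k) = q ^ m"
    and basis: "is_basis_Fq emb m b"
    and gen: "\<gamma> \<noteq> 0" "\<forall>x::'k. x \<noteq> 0 \<longrightarrow> (\<exists>e::nat. x = \<gamma> ^ e)"
    and beta: "lin_indep_Fq emb m \<beta>"
    and n: "n = (q - 1) * m"
    and k: "1 \<le> k" "k \<le> n"
    and lam: "\<exists>i<k. lam i \<noteq> 0"
  shows "(\<Sum>l<q - 1. rk_Fq emb m b (lamM q k \<gamma> \<beta> lam l)) \<ge> n - k + 1"
proof -
  interpret Fq_extension_gen emb q m \<gamma>
    by unfold_locales (use emb q card_k gen in auto)
  define f where "f l = skew_eval q lam k (\<gamma> ^ l)" for l
  define R where "R l = rk_Fq emb m b (lamM q k \<gamma> \<beta> lam l)" for l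
  have block: "q ^ m \<le> q ^ R l * card {y. f l y = 0}" for l
    unfolding R_def f_def lamM_eq_skew_eval
    by (rule card_le_power_rk_Fq_mult_card_kernel[OF basis beta card_k])
      (simp_all add: skew_eval_add skew_eval_emb_mult)
  have "q ^ ((q - 1) * m) = (\<Prod>l<q - 1. q ^ m)"
    by (simp add: power_mult mult.commute)
  also have "\<dots> \<le> (\<Prod>l<q - 1. q ^ R l * card {y. f l y = 0})"
    by (rule prod_mono) (simp add: block)
  also have "\<dots> = q ^ (\<Sum>l<q - 1. R l) * (\<Prod>l<q - 1. card {y. f l y = 0})"
    by (simp add: prod.distrib power_sum)
  also have "\<dots> \<le> q ^ (\<Sum>l<q - 1. R l) * q ^ (k - 1)"
    unfolding f_def using prod_card_skew_roots_le_pow[OF lam] by simp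
  also have "\<dots> = q ^ ((\<Sum>l<q - 1. R l) + (k - 1))"
    by (simp add: power_add)
  finally have "(q - 1) * m \<le> (\<Sum>l<q - 1. R l) + (k - 1)"
    by (rule power_le_imp_le_exp[rotated]) (use q_ge_2 in simp)
  then show ?thesis
    unfolding R_def using n k by linarith
qed

end
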